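(* Let $\mathcal{S}\in\mathscr{W}$ be $C^3$-smooth with an isolated umbilic point at $\theta=0$, and let $\alpha\in\mathbb{R}$. Then (1) if $\mu_0>\alpha+1$, then $\lim_{\theta\to0}\frac{s(\theta)}{\sin^\alpha\theta}=0$; (2) if $\mu_0<\alpha+1$, then $\lim_{\theta\to0}\frac{s(\theta)}{\sin^\alpha\theta}=\pm\infty$. If $\mathcal{S}$ has an isolated umbilic point at $\theta=\pi$, then the value of $\mu_\pi$ dictates the behaviour of $s/\sin^\alpha\theta$ as $\theta\to\pi$ in the same way.
   Context: $\mathscr{W}$ is the set of embedded $C^2$-smooth topological 2-spheres in $\mathbb{R}^3$ that are rotationally symmetric and strictly convex. A surface in $\mathscr{W}$ is parametrised by the inverse Gauss map with $\theta\in[0,\pi]$ the angle between the outward normal and the symmetry axis ($\theta=0,\pi$ are the poles). With support function $r(\theta)=\vec X\cdot\hat n$, the radii of curvature are $r_1=\frac{\cos^2\theta}{\sin\theta}\frac{d}{d\theta}\left(\frac{r}{\cos\theta}\right)$, $r_2=r''+r$, and the astigmatism is $s=r_2-r_1$; umbilic points are where $s=0$. The umbilic slopes are $\mu_0=\lim_{\theta\to0}\frac{r_2(\theta)-r_2(0)}{r_1(\theta)-r_1(0)}$ and $\mu_\pi=\lim_{\theta\to\pi}\frac{r_2(\theta)-r_2(\pi)}{r_1(\theta)-r_1(\pi)}$. *)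

theory Defs
  imports "HOL-Analysis.Analysis"
begin

text \<open>A rotationally symmetric strictly convex sphere is described by its support
function r(theta), theta in [0,pi] the angle between the outward normal and the axis.
C^3-smoothness of the surface, together with smoothness at the poles, is encoded by
requiring that r extends to a C^3 function on the real line which is even about
theta = 0 and about theta = pi (the smooth extension through the poles).\<close>

definition C3_real :: "(real \<Rightarrow> real) \<Rightarrow> bool" where
  "C3_real f \<longleftrightarrow>
     (\<forall>x. f differentiable at x) \<and>
     (\<forall>x. deriv f differentiable at x) \<and>
     (\<forall>x. deriv (deriv f) differentiable at x) \<and>
     continuous_on UNIV (deriv (deriv (deriv f)))"

text \<open>Radii of curvature. r2 = r'' + r. The paper's
r1 = cos^2/sin * d/dtheta (r / cos) equals r + r' cos / sin away from the poles;
at the poles (sin = 0) r1 is defined as its limit value r'' + r.\<close>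

definition radius2 :: "(real \<Rightarrow> real) \<Rightarrow> real \<Rightarrow> real" where
  "radius2 r \<theta> = deriv (deriv r) \<theta> + r \<theta>"

definition radius1 :: "(real \<Rightarrow> real) \<Rightarrow> real \<Rightarrow> real" where
  "radius1 r \<theta> = (if sin \<theta> = 0 then radius2 r \<theta>
                    else r \<theta> + deriv r \<theta> * cos \<theta> / sin \<theta>)"

definition astig :: "(real \<Rightarrow> real) \<Rightarrow> real \<Rightarrow> real" where
  "astig r \<theta> = radius2 r \<theta> - radius1 r \<theta>"

definition in_W3 :: "(real \<Rightarrow> real) \<Rightarrow> bool" where
  "in_W3 r \<longleftrightarrow> C3_real r \<and>
     (\<forall>\<theta>. r (- \<theta>) = r \<theta>) \<and>
     (\<forall>\<theta>. r (pi + \<theta>) = r (pi - \<theta>)) \<and>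
     (\<forall>\<theta>\<in>{0..pi}. radius1 r \<theta> > 0 \<and> radius2 r \<theta> > 0)"

definition isolated_umbilic_0 :: "(real \<Rightarrow> real) \<Rightarrow> bool" where
  "isolated_umbilic_0 r \<longleftrightarrow> astig r 0 = 0 \<and>
     (\<exists>e>0. \<forall>\<theta>. 0 < \<theta> \<and> \<theta> < e \<longrightarrow> astig r \<theta> \<noteq> 0)"

definition isolated_umbilic_pi :: "(real \<Rightarrow> real) \<Rightarrow> bool" where
  "isolated_umbilic_pi r \<longleftrightarrow> astig r pi = 0 \<and>
     (\<exists>e>0. \<forall>\<theta>. pi - e < \<theta> \<and> \<theta> < pi \<longrightarrow> astig r \<theta> \<noteq> 0)"

definition umbilic_slope_0 :: "(real \<Rightarrow> real) \<Rightarrow> ereal \<Rightarrow> bool" where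
  "umbilic_slope_0 r \<mu> \<longleftrightarrow>
     ((\<lambda>\<theta>. ereal ((radius2 r \<theta> - radius2 r 0) / (radius1 r \<theta> - radius1 r 0)))
        \<longlongrightarrow> \<mu>) (at_right 0)"

definition umbilic_slope_pi :: "(real \<Rightarrow> real) \<Rightarrow> ereal \<Rightarrow> bool" where
  "umbilic_slope_pi r \<mu> \<longleftrightarrow>
     ((\<lambda>\<theta>. ereal ((radius2 r \<theta> - radius2 r pi) / (radius1 r \<theta> - radius1 r pi)))
        \<longlongrightarrow> \<mu>) (at_left pi)"

end

(*
  Put F = r1 - r1(0) and G = r2 - r2(0), so that s = G - F and the Codazzi equation reads
  F' = s cot theta.  Near an isolated umbilic s has a sign; say s > 0.  Then F increases from 0,
  and (ln F - (beta - 1) ln sin theta)' = cot theta (G/F - beta).  Hence, for beta on either side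
  of the umbilic slope mu = lim G/F, F is bounded above or below by a multiple of
  sin^(beta - 1) theta, and s = F (G/F - 1) inherits the bound: s / sin^alpha theta tends to
  infinity if mu < alpha + 1 and to 0 if alpha + 1 < mu < infinity.  Since G is Lipschitz, s
  cannot drop by more than half on an interval of length min(theta/2, s/(2L)) to the left of
  theta; integrating F' over that interval bounds s(theta)^2 and theta s(theta) by multiples of
  sin^beta theta, which settles mu = infinity.  The same Lipschitz bound gives F < G = O(theta),
  which excludes mu = 1.  The pole theta = pi is reduced to theta = 0 by reflecting r.
*)
theory Submission
  imports Defs "HOL-Real_Asymp.Real_Asymp"
begin

definition sin_power_dichotomy :: "(real \<Rightarrow> real) \<Rightarrow> real filter \<Rightarrow> ereal \<Rightarrow> real \<Rightarrow> bool" where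
  "sin_power_dichotomy f F \<mu> \<alpha> \<longleftrightarrow>
     (\<mu> > ereal (\<alpha> + 1) \<longrightarrow> ((\<lambda>\<theta>. f \<theta> / sin \<theta> powr \<alpha>) \<longlongrightarrow> 0) F) \<and>
     (\<mu> < ereal (\<alpha> + 1) \<longrightarrow>
        filterlim (\<lambda>\<theta>. f \<theta> / sin \<theta> powr \<alpha>) at_top F \<or>
        filterlim (\<lambda>\<theta>. f \<theta> / sin \<theta> powr \<alpha>) at_bot F)"

lemma sin_power_dichotomy_uminus:
  "sin_power_dichotomy (\<lambda>\<theta>. - f \<theta>) F \<mu> \<alpha> \<longleftrightarrow> sin_power_dichotomy f F \<mu> \<alpha>"
proof -
  let ?q = "\<lambda>\<theta>. f \<theta> / sin \<theta> powr \<alpha>"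
  have q: "(\<lambda>\<theta>. - f \<theta> / sin \<theta> powr \<alpha>) = (\<lambda>\<theta>. - ?q \<theta>)"
    by simp
  have "((\<lambda>\<theta>. - ?q \<theta>) \<longlongrightarrow> 0) F \<longleftrightarrow> (?q \<longlongrightarrow> 0) F"
    using tendsto_minus_cancel_left[of ?q 0 F] by simp
  moreover have "filterlim (\<lambda>\<theta>. - ?q \<theta>) at_top F \<longleftrightarrow> filterlim ?q at_bot F"
    by (simp add: filterlim_uminus_at_bot)
  moreover have "filterlim (\<lambda>\<theta>. - ?q \<theta>) at_bot F \<longleftrightarrow> filterlim ?q at_top F"
    by (simp add: filterlim_uminus_at_top)
  ultimately show ?thesis
    unfolding sin_power_dichotomy_def q by blast
qed

lemma filterlim_at_left_reflect:
  "filterlim h F (at_left a) \<longleftrightarrow> filterlim (\<lambda>\<theta>. h (a - \<theta>)) F (at_right (0::real))"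
  unfolding filterlim_at_left_to_right[of h F a] filterlim_at_right_to_0[of _ F "- a"]
  by simp

lemma sin_power_dichotomy_at_left_pi_iff:
  "sin_power_dichotomy f (at_left pi) \<mu> \<alpha> \<longleftrightarrow>
   sin_power_dichotomy (\<lambda>\<theta>. f (pi - \<theta>)) (at_right 0) \<mu> \<alpha>"
  unfolding sin_power_dichotomy_def filterlim_at_left_reflect[of "\<lambda>\<theta>. f \<theta> / sin \<theta> powr \<alpha>"]
  by simp

lemma continuous_on_nonzero_sign_cases:
  fixes f :: "'a::topological_space \<Rightarrow> real"
  assumes "connected S" "continuous_on S f" "\<And>x. x \<in> S \<Longrightarrow> f x \<noteq> 0"
  shows "(\<forall>x\<in>S. 0 < f x) \<or> (\<forall>x\<in>S. f x < 0)"
proof (rule ccontr)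
  assume "\<not> ?thesis"
  then obtain x y where "x \<in> S" "y \<in> S" "f x < 0" "0 < f y"
    using assms(3) by (meson linorder_neqE_linordered_idom)
  moreover have "connected (f ` S)"
    using assms(2,1) by (rule connected_continuous_image)
  ultimately have "0 \<in> f ` S"
    unfolding connected_iff_interval by (meson image_eqI less_imp_le)
  then show False
    using assms(3) by (metis imageE)
qed

lemma DERIV_reflect:
  assumes "(f has_real_derivative f') (at (a - x))"
  shows "((\<lambda>\<theta>. f (a - \<theta>)) has_real_derivative - f') (at x)"
  using DERIV_chain2[OF assms DERIV_diff[OF DERIV_const DERIV_ident]] by simp

lemma deriv_reflect:
  assumes "\<And>x. (f has_real_derivative f' x) (at x)"
  shows "deriv (\<lambda>\<theta>. f (a - \<theta>)) = (\<lambda>x. - f' (a - x))"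
  using DERIV_reflect[OF assms] by (intro ext DERIV_imp_deriv)

lemma deriv_zero_if_even:
  assumes "\<And>x. f (- x) = f x" "(f has_real_derivative f') (at 0)"
  shows "f' = 0"
proof -
  have "((\<lambda>x. f (- x)) has_real_derivative - f') (at 0)"
    using assms(2) DERIV_mirror[where f=f and x=0 and y=f'] by simp
  then have "(f has_real_derivative - f') (at 0)"
    by (simp add: assms(1))
  with assms(2) have "f' = - f'"
    by (rule DERIV_unique)
  then show ?thesis
    by simp
qed

lemma cos_1_pos: "0 < cos (1::real)"
  using cos_gt_zero[of 1] pi_gt3 by simp

section \<open>Radii near an umbilic\<close>

text \<open>\<open>F\<close> and \<open>G\<close> stand for \<open>\<sigma> (r\<^sub>1 - r\<^sub>1(0))\<close> and \<open>\<sigma> (r\<^sub>2 - r\<^sub>2(0))\<close>,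
  with a sign \<open>\<sigma>\<close> making the astigmatism \<open>G - F\<close> positive near \<open>0\<close>;
  \<open>F_deriv\<close> is the Codazzi equation.\<close>

locale umbilic_radii =
  fixes F G :: "real \<Rightarrow> real" and e L :: real
  assumes e: "0 < e" "e \<le> 1"
    and F_deriv: "\<And>x. 0 < x \<Longrightarrow> x < e \<Longrightarrow> (F has_real_derivative (G x - F x) * cos x / sin x) (at x)"
    and F_less_G: "\<And>x. 0 < x \<Longrightarrow> x < e \<Longrightarrow> F x < G x"
    and G_lipschitz: "L-lipschitz_on {0<..<e} G"
    and L_pos: "0 < L"
    and F_tendsto: "(F \<longlongrightarrow> 0) (at_right 0)"
    and G_tendsto: "(G \<longlongrightarrow> 0) (at_right 0)"
begin

lemma eventually_in_domain: "\<forall>\<^sub>F x in at_right 0. 0 < x \<and> x < e"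
  using e by (intro eventually_at_rightI[of 0 e]) auto

lemma sin_cos_bounds:
  assumes "0 < x" "x < e"
  shows "0 < sin x" "sin x \<le> 1" "cos 1 \<le> cos x"
proof -
  have "x < pi" "x \<le> 1"
    using assms e pi_gt3 by linarith+
  then show "0 < sin x" "sin x \<le> 1" "cos 1 \<le> cos x"
    using assms pi_gt3 by (auto intro: sin_gt_zero cos_monotone_0_pi_le)
qed

lemma sin_mono:
  assumes "0 < y" "y \<le> x" "x < e"
  shows "sin y \<le> sin x"
  using assms e pi_gt3 by (intro sin_monotone_2pi_le) auto

lemma F_strict_mono:
  assumes "0 < x" "x < y" "y < e"
  shows "F x < F y"
proof (rule DERIV_pos_imp_increasing[OF assms(2)])
  fix z assume "x \<le> z" "z \<le> y"
  then have z: "0 < z" "z < e"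
    using assms by linarith+
  have "0 < (G z - F z) * cos z / sin z"
    using F_less_G[OF z] sin_cos_bounds[OF z] cos_1_pos by auto
  then show "\<exists>d. (F has_real_derivative d) (at z) \<and> 0 < d"
    using F_deriv[OF z] by blast
qed

lemma F_pos:
  assumes "0 < x" "x < e"
  shows "0 < F x"
proof -
  have "\<forall>\<^sub>F y in at_right 0. F y \<le> F (x / 2)"
    using assms by (intro eventually_at_rightI[of 0 "x / 2"]) (auto intro!: less_imp_le F_strict_mono)
  then have "0 \<le> F (x / 2)"
    using F_tendsto by (intro tendsto_upperbound) auto
  also have "F (x / 2) < F x"
    using assms by (intro F_strict_mono) auto
  finally show ?thesis .
qed

lemma ratio_gt_1:
  assumes "0 < x" "x < e"
  shows "1 < G x / F x"
  using F_less_G[OF assms] F_pos[OF assms] by simp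

lemma G_diff_le:
  assumes "0 < x" "x < e" "0 < y" "y < e"
  shows "\<bar>G x - G y\<bar> \<le> L * \<bar>x - y\<bar>"
  using lipschitz_onD[OF G_lipschitz, of x y] assms by (simp add: dist_real_def)

lemma G_le_linear:
  assumes "0 < x" "x < e"
  shows "G x \<le> L * x"
proof (rule tendsto_lowerbound)
  show "((\<lambda>y. G y + L * (x - y)) \<longlongrightarrow> L * x) (at_right 0)"
    by (auto intro!: tendsto_eq_intros G_tendsto)
  show "\<forall>\<^sub>F y in at_right 0. G x \<le> G y + L * (x - y)"
  proof (rule eventually_at_rightI[of 0 x])
    fix y assume "y \<in> {0<..<x}"
    then show "G x \<le> G y + L * (x - y)"
      using G_diff_le[of x y] assms by auto
  qed (use assms in simp)
qed simp

lemma log_ratio_has_derivative: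
  assumes "0 < x" "x < e"
  shows "((\<lambda>z. ln (F z) - (\<beta> - 1) * ln (sin z)) has_real_derivative
           cos x / sin x * (G x / F x - \<beta>)) (at x)"
proof -
  have F: "0 < F x" and sin: "0 < sin x"
    using F_pos[OF assms] sin_cos_bounds[OF assms] by auto
  have "((\<lambda>z. ln (F z) - (\<beta> - 1) * ln (sin z)) has_real_derivative
           1 / F x * ((G x - F x) * cos x / sin x) - (\<beta> - 1) * (1 / sin x * cos x)) (at x)"
    by (intro DERIV_diff DERIV_cmult DERIV_chain2[OF DERIV_ln_divide] F_deriv assms F sin DERIV_sin)
  moreover have "1 / F x * ((G x - F x) * cos x / sin x) - (\<beta> - 1) * (1 / sin x * cos x)
      = cos x / sin x * (G x / F x - \<beta>)"
    using F sin by (simp add: field_simps)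
  ultimately show ?thesis
    by simp
qed

lemma F_over_sin_powr_eq_exp:
  assumes "0 < x" "x < e"
  shows "F x / sin x powr (\<beta> - 1) = exp (ln (F x) - (\<beta> - 1) * ln (sin x))"
  using F_pos[OF assms] sin_cos_bounds[OF assms] by (simp add: powr_def exp_diff)

lemma continuous_on_log_ratio:
  assumes "0 < x" "y < e"
  shows "continuous_on {x..y} (\<lambda>z. ln (F z) - (\<beta> - 1) * ln (sin z))"
  using assms
  by (intro continuous_at_imp_continuous_on ballI DERIV_isCont[OF log_ratio_has_derivative]) auto

lemma F_over_sin_powr_mono:
  assumes "0 < x" "x \<le> y" "y < e" "\<And>z. x < z \<Longrightarrow> z < y \<Longrightarrow> \<beta> \<le> G z / F z"
  shows "F x / sin x powr (\<beta> - 1) \<le> F y / sin y powr (\<beta> - 1)"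
proof -
  have "ln (F x) - (\<beta> - 1) * ln (sin x) \<le> ln (F y) - (\<beta> - 1) * ln (sin y)"
  proof (rule DERIV_nonneg_imp_increasing_open[OF assms(2) _ continuous_on_log_ratio[OF assms(1,3)]])
    fix z assume z: "x < z" "z < y"
    then have z': "0 < z" "z < e"
      using assms by linarith+
    have "0 \<le> cos z / sin z * (G z / F z - \<beta>)"
      using sin_cos_bounds[OF z'] cos_1_pos assms(4)[OF z] by (intro mult_nonneg_nonneg) auto
    then show "\<exists>d. ((\<lambda>z. ln (F z) - (\<beta> - 1) * ln (sin z)) has_real_derivative d) (at z) \<and> 0 \<le> d"
      using log_ratio_has_derivative[OF z'] by blast
  qed
  then show ?thesis
    using assms by (simp add: F_over_sin_powr_eq_exp)
qed

lemma F_over_sin_powr_antimono: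
  assumes "0 < x" "x \<le> y" "y < e" "\<And>z. x < z \<Longrightarrow> z < y \<Longrightarrow> G z / F z \<le> \<beta>"
  shows "F y / sin y powr (\<beta> - 1) \<le> F x / sin x powr (\<beta> - 1)"
proof -
  have "ln (F y) - (\<beta> - 1) * ln (sin y) \<le> ln (F x) - (\<beta> - 1) * ln (sin x)"
  proof (rule DERIV_nonpos_imp_decreasing_open[OF assms(2) _ continuous_on_log_ratio[OF assms(1,3)]])
    fix z assume z: "x < z" "z < y"
    then have z': "0 < z" "z < e"
      using assms by linarith+
    have "cos z / sin z * (G z / F z - \<beta>) \<le> 0"
      using sin_cos_bounds[OF z'] cos_1_pos assms(4)[OF z] by (intro mult_nonneg_nonpos) auto
    then show "\<exists>d. ((\<lambda>z. ln (F z) - (\<beta> - 1) * ln (sin z)) has_real_derivative d) (at z) \<and> d \<le> 0"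
      using log_ratio_has_derivative[OF z'] by blast
  qed
  then show ?thesis
    using assms by (simp add: F_over_sin_powr_eq_exp)
qed

lemma eventually_F_le_sin_powr:
  assumes "\<forall>\<^sub>F x in at_right 0. \<beta> \<le> G x / F x"
  obtains C where "0 < C" "\<forall>\<^sub>F x in at_right 0. F x \<le> C * sin x powr (\<beta> - 1)"
proof -
  obtain b where "0 < b" and b: "\<And>z. 0 < z \<Longrightarrow> z < b \<Longrightarrow> \<beta> \<le> G z / F z"
    using assms unfolding eventually_at_right_field by auto
  define y where "y = min b e / 2"
  have y: "0 < y" "y < b" "y < e"
    using \<open>0 < b\<close> e unfolding y_def by auto
  define C where "C = F y / sin y powr (\<beta> - 1)"
  show thesis
  proof
    show "0 < C"
      using F_pos[OF y(1,3)] sin_cos_bounds[OF y(1,3)] by (simp add: C_def)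
    show "\<forall>\<^sub>F x in at_right 0. F x \<le> C * sin x powr (\<beta> - 1)"
    proof (rule eventually_at_rightI[of 0 y])
      fix x assume x: "x \<in> {0<..<y}"
      then have "F x / sin x powr (\<beta> - 1) \<le> C"
        unfolding C_def using y by (intro F_over_sin_powr_mono b) auto
      then show "F x \<le> C * sin x powr (\<beta> - 1)"
        using sin_cos_bounds[of x] x y by (simp add: divide_le_eq)
    qed (use y in simp)
  qed
qed

lemma eventually_F_ge_sin_powr:
  assumes "\<forall>\<^sub>F x in at_right 0. G x / F x \<le> \<beta>"
  obtains C where "0 < C" "\<forall>\<^sub>F x in at_right 0. C * sin x powr (\<beta> - 1) \<le> F x"
proof -
  obtain b where "0 < b" and b: "\<And>z. 0 < z \<Longrightarrow> z < b \<Longrightarrow> G z / F z \<le> \<beta>"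
    using assms unfolding eventually_at_right_field by auto
  define y where "y = min b e / 2"
  have y: "0 < y" "y < b" "y < e"
    using \<open>0 < b\<close> e unfolding y_def by auto
  define C where "C = F y / sin y powr (\<beta> - 1)"
  show thesis
  proof
    show "0 < C"
      using F_pos[OF y(1,3)] sin_cos_bounds[OF y(1,3)] by (simp add: C_def)
    show "\<forall>\<^sub>F x in at_right 0. C * sin x powr (\<beta> - 1) \<le> F x"
    proof (rule eventually_at_rightI[of 0 y])
      fix x assume x: "x \<in> {0<..<y}"
      then have "C \<le> F x / sin x powr (\<beta> - 1)"
        unfolding C_def using y by (intro F_over_sin_powr_antimono b) auto
      then show "C * sin x powr (\<beta> - 1) \<le> F x"
        using sin_cos_bounds[of x] x y by (simp add: le_divide_eq)
    qed (use y in simp)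
  qed
qed

lemma gap_half_on_left:
  assumes "0 < x - h" "h \<le> (G x - F x) / (2 * L)" "x - h \<le> y" "y \<le> x" "x < e"
  shows "(G x - F x) / 2 \<le> G y - F y"
proof -
  have y: "0 < y" "y < e"
    using assms by linarith+
  have "G x - G y \<le> L * \<bar>x - y\<bar>"
    using G_diff_le[OF _ assms(5) y] y assms(4) by linarith
  also have "\<dots> \<le> L * h"
    using assms(3,4) L_pos by (intro mult_left_mono) auto
  also have "\<dots> \<le> (G x - F x) / 2"
    using assms(2) L_pos by (simp add: field_simps)
  finally have "G x - G y \<le> (G x - F x) / 2" .
  moreover have "F y \<le> F x"
    using F_strict_mono[of y x] assms(4,5) y by (cases "y = x") auto
  ultimately show ?thesis
    by (simp add: field_simps)
qed

lemma F_ge_gap_times_width: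
  assumes "0 < h" "h < x" "x < e" "h \<le> (G x - F x) / (2 * L)"
  shows "h * (G x - F x) * cos 1 \<le> 2 * sin x * F x"
proof -
  obtain z where z: "x - h < z" "z < x"
    and mvt: "F x - F (x - h) = h * ((G z - F z) * cos z / sin z)"
    using MVT2[of "x - h" x F "\<lambda>z. (G z - F z) * cos z / sin z"] assms F_deriv by force
  have z': "0 < z" "z < e"
    using z assms by linarith+
  have "(G x - F x) / 2 * cos 1 \<le> (G z - F z) * cos z"
    using gap_half_on_left[of x h z] assms z F_less_G[of x] sin_cos_bounds[OF z'] cos_1_pos
    by (intro mult_mono) auto
  then have "(G x - F x) / 2 * cos 1 / sin x \<le> (G z - F z) * cos z / sin z"
    using sin_cos_bounds[OF z'] F_less_G[OF z'] sin_mono[of z x] z assms cos_1_pos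
    by (intro frac_le mult_nonneg_nonneg) auto
  also have "h * \<dots> \<le> F x"
    using mvt F_pos[of "x - h"] assms by simp
  finally have "h * ((G x - F x) / 2 * cos 1 / sin x) \<le> F x"
    using assms(1) by (simp add: mult_left_mono)
  then show ?thesis
    using sin_cos_bounds[of x] assms by (simp add: field_simps)
qed

lemma gap_times_min_width_le:
  assumes "0 < x" "x < e" "F x \<le> C * sin x powr (\<beta> - 1)"
  shows "min (x / 2) ((G x - F x) / (2 * L)) * (G x - F x) * cos 1
           \<le> 2 * C * (sin x * sin x powr (\<beta> - 1))"
proof -
  have "min (x / 2) ((G x - F x) / (2 * L)) * (G x - F x) * cos 1 \<le> 2 * sin x * F x"
    using assms F_less_G[OF assms(1,2)] L_pos by (intro F_ge_gap_times_width) auto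
  also have "\<dots> \<le> 2 * sin x * (C * sin x powr (\<beta> - 1))"
    using assms(3) sin_cos_bounds[OF assms(1,2)] by simp
  finally show ?thesis
    by (simp add: algebra_simps)
qed

lemma gap_le_sin_powr:
  assumes "0 < x" "x < e" "2 \<le> \<beta>" "F x \<le> C * sin x powr (\<beta> - 1)"
  shows "G x - F x \<le> (4 * C / cos 1 + sqrt (4 * L * C / cos 1)) * sin x powr (\<beta> / 2)"
proof -
  define d u c w where "d = G x - F x" and "u = sin x" and "c = cos (1::real)"
    and "w = sin x powr (\<beta> / 2)"
  have d: "0 < d" and u: "0 < u" "u \<le> 1" "u \<le> x" and c: "0 < c" and w: "0 < w"
    using F_less_G[OF assms(1,2)] sin_cos_bounds[OF assms(1,2)] sin_x_le_x[of x] assms(1) cos_1_pos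
    unfolding d_def u_def c_def w_def by auto
  have "0 < C * u powr (\<beta> - 1)"
    using F_pos[OF assms(1,2)] assms(4) unfolding u_def by linarith
  then have C: "0 < C"
    using u by (simp add: zero_less_mult_iff)
  have uw: "u powr (\<beta> - 1) \<le> w" "u * u powr (\<beta> - 1) = w * w"
    using u assms(3) unfolding w_def u_def
    by (auto intro: powr_mono' simp: powr_mult_base powr_add[symmetric])
  have key: "min (x / 2) (d / (2 * L)) * d * c \<le> 2 * C * (u * u powr (\<beta> - 1))"
    unfolding d_def u_def c_def using assms(1,2,4) by (rule gap_times_min_width_le)
  show ?thesis
  proof (cases "x / 2 \<le> d / (2 * L)")
    case True
    have "u * (d * c) \<le> x * (d * c)"
      using u d c by (intro mult_right_mono) auto
    also have "\<dots> \<le> u * (4 * C * u powr (\<beta> - 1))"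
      using key True by (simp add: algebra_simps)
    finally have "d * c \<le> 4 * C * u powr (\<beta> - 1)"
      using u by simp
    also have "\<dots> \<le> 4 * C * w"
      using uw C by simp
    finally have "d \<le> 4 * C / c * w"
      using c by (simp add: field_simps)
    moreover have "0 \<le> sqrt (4 * L * C / c) * w"
      using L_pos C c w by simp
    ultimately show ?thesis
      unfolding d_def w_def c_def by (simp add: distrib_right)
  next
    case False
    then have "d\<^sup>2 \<le> 4 * L * C / c * w\<^sup>2"
      using key uw c L_pos by (simp add: power2_eq_square field_simps)
    then have "d \<le> sqrt (4 * L * C / c * w\<^sup>2)"
      by (rule real_le_rsqrt)
    also have "\<dots> = sqrt (4 * L * C / c) * w"
      unfolding real_sqrt_mult real_sqrt_abs using w by simp
    finally have "d \<le> sqrt (4 * L * C / c) * w" .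
    moreover have "0 \<le> 4 * C / c * w"
      using C c w by simp
    ultimately show ?thesis
      unfolding d_def w_def c_def by (simp add: distrib_right)
  qed
qed

lemma slope_ge_1:
  assumes slope: "((\<lambda>x. ereal (G x / F x)) \<longlongrightarrow> \<mu>) (at_right 0)"
  shows "1 \<le> \<mu>"
proof (rule tendsto_lowerbound[OF slope])
  show "\<forall>\<^sub>F x in at_right 0. 1 \<le> ereal (G x / F x)"
    using eventually_in_domain by eventually_elim (use ratio_gt_1 in force)
qed simp

lemma slope_ne_1:
  assumes slope: "((\<lambda>x. ereal (G x / F x)) \<longlongrightarrow> \<mu>) (at_right 0)"
  shows "\<mu> \<noteq> 1"
proof
  assume "\<mu> = 1"
  then have "\<forall>\<^sub>F x in at_right 0. G x / F x \<le> 3 / 2"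
    using order_tendstoD(2)[OF slope, of "ereal (3 / 2)"] by (auto elim: eventually_mono)
  then obtain C where "0 < C" and lower: "\<forall>\<^sub>F x in at_right 0. C * sin x powr (3 / 2 - 1) \<le> F x"
    by (rule eventually_F_ge_sin_powr)
  have "filterlim (\<lambda>x. C * sin x powr (1 / 2) / x) at_top (at_right 0)"
    using \<open>0 < C\<close> by real_asymp
  then have "\<forall>\<^sub>F x in at_right 0. L + 1 \<le> C * sin x powr (1 / 2) / x"
    by (simp add: filterlim_at_top)
  moreover have "\<forall>\<^sub>F x in at_right 0. C * sin x powr (1 / 2) / x \<le> L"
    using lower eventually_in_domain
  proof eventually_elim
    case (elim x)
    then have "C * sin x powr (1 / 2) \<le> L * x"
      using F_less_G[of x] G_le_linear[of x] by simp
    then show ?case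
      using elim by (simp add: divide_simps)
  qed
  ultimately have "\<forall>\<^sub>F x in at_right (0::real). False"
    by eventually_elim simp
  then show False
    by simp
qed

lemma gap_over_sin_powr_at_top:
  assumes slope: "((\<lambda>x. ereal (G x / F x)) \<longlongrightarrow> \<mu>) (at_right 0)"
    and "\<mu> < ereal (\<alpha> + 1)"
  shows "filterlim (\<lambda>x. (G x - F x) / sin x powr \<alpha>) at_top (at_right 0)"
proof -
  obtain m where m: "\<mu> = ereal m" "1 < m" "m < \<alpha> + 1"
    using slope_ge_1[OF slope] slope_ne_1[OF slope] assms(2)
    by (cases \<mu>) (auto simp: one_ereal_def)
  define \<beta> c where "\<beta> = (m + \<alpha> + 1) / 2" and "c = (m - 1) / 2"
  have "0 < c" "ereal (1 + c) < \<mu>" "\<mu> < ereal \<beta>" "\<beta> - 1 - \<alpha> < 0"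
    using m unfolding \<beta>_def c_def by (auto simp: field_simps)
  have "\<forall>\<^sub>F x in at_right 0. G x / F x \<le> \<beta>"
    using order_tendstoD(2)[OF slope \<open>\<mu> < ereal \<beta>\<close>] by eventually_elim simp
  then obtain C where "0 < C" and lower: "\<forall>\<^sub>F x in at_right 0. C * sin x powr (\<beta> - 1) \<le> F x"
    by (rule eventually_F_ge_sin_powr)
  have "filterlim (\<lambda>x. C * c * sin x powr (\<beta> - 1 - \<alpha>)) at_top (at_right 0)"
    using \<open>0 < C\<close> \<open>0 < c\<close> \<open>\<beta> - 1 - \<alpha> < 0\<close> by real_asymp
  moreover have "\<forall>\<^sub>F x in at_right 0. C * c * sin x powr (\<beta> - 1 - \<alpha>) \<le> (G x - F x) / sin x powr \<alpha>"
    using lower order_tendstoD(1)[OF slope \<open>ereal (1 + c) < \<mu>\<close>] eventually_in_domain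
  proof eventually_elim
    case (elim x)
    have "C * c * sin x powr (\<beta> - 1 - \<alpha>) = C * sin x powr (\<beta> - 1) * c / sin x powr \<alpha>"
      by (simp add: powr_diff)
    also have "C * sin x powr (\<beta> - 1) * c \<le> F x * (G x / F x - 1)"
      using elim F_pos[of x] \<open>0 < C\<close> \<open>0 < c\<close> by (intro mult_mono) auto
    also have "F x * (G x / F x - 1) = G x - F x"
      using F_pos[of x] elim by (simp add: field_simps)
    finally show ?case
      using sin_cos_bounds[of x] elim by (simp add: divide_right_mono)
  qed
  ultimately show ?thesis
    by (rule filterlim_at_top_mono)
qed

lemma gap_over_sin_powr_tendsto_0_finite:
  assumes slope: "((\<lambda>x. ereal (G x / F x)) \<longlongrightarrow> ereal m) (at_right 0)"
    and "\<alpha> + 1 < m"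
  shows "((\<lambda>x. (G x - F x) / sin x powr \<alpha>) \<longlongrightarrow> 0) (at_right 0)"
proof -
  define \<beta> where "\<beta> = (m + \<alpha> + 1) / 2"
  have "ereal \<beta> < ereal m" "ereal m < ereal (m + 1)" "0 < \<beta> - 1 - \<alpha>"
    using assms(2) unfolding \<beta>_def by auto
  have "\<forall>\<^sub>F x in at_right 0. \<beta> \<le> G x / F x"
    using order_tendstoD(1)[OF slope \<open>ereal \<beta> < ereal m\<close>] by eventually_elim simp
  then obtain C where "0 < C" and upper: "\<forall>\<^sub>F x in at_right 0. F x \<le> C * sin x powr (\<beta> - 1)"
    by (rule eventually_F_le_sin_powr)
  have lim: "((\<lambda>x. C * m * sin x powr (\<beta> - 1 - \<alpha>)) \<longlongrightarrow> 0) (at_right 0)"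
    using \<open>0 < \<beta> - 1 - \<alpha>\<close> by real_asymp
  have bounds: "\<forall>\<^sub>F x in at_right 0.
      0 \<le> (G x - F x) / sin x powr \<alpha> \<and> (G x - F x) / sin x powr \<alpha> \<le> C * m * sin x powr (\<beta> - 1 - \<alpha>)"
    using upper order_tendstoD(2)[OF slope \<open>ereal m < ereal (m + 1)\<close>] eventually_in_domain
  proof eventually_elim
    case (elim x)
    have "G x - F x = F x * (G x / F x - 1)"
      using F_pos[of x] elim by (simp add: field_simps)
    also have "\<dots> \<le> C * sin x powr (\<beta> - 1) * m"
      using elim ratio_gt_1[of x] F_pos[of x] by (intro mult_mono) auto
    finally have "(G x - F x) / sin x powr \<alpha> \<le> C * sin x powr (\<beta> - 1) * m / sin x powr \<alpha>"
      by (simp add: divide_right_mono)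
    also have "\<dots> = C * m * sin x powr (\<beta> - 1 - \<alpha>)"
      by (simp add: powr_diff)
    finally show ?case
      using F_less_G[of x] elim by simp
  qed
  show ?thesis
  proof (rule tendsto_sandwich[OF _ _ tendsto_const lim])
    show "\<forall>\<^sub>F x in at_right 0. 0 \<le> (G x - F x) / sin x powr \<alpha>"
      using bounds by eventually_elim simp
    show "\<forall>\<^sub>F x in at_right 0. (G x - F x) / sin x powr \<alpha> \<le> C * m * sin x powr (\<beta> - 1 - \<alpha>)"
      using bounds by eventually_elim simp
  qed
qed

lemma gap_over_sin_powr_tendsto_0_infinite:
  assumes slope: "((\<lambda>x. ereal (G x / F x)) \<longlongrightarrow> \<infinity>) (at_right 0)"
  shows "((\<lambda>x. (G x - F x) / sin x powr \<alpha>) \<longlongrightarrow> 0) (at_right 0)"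
proof -
  define \<beta> where "\<beta> = 2 * \<bar>\<alpha>\<bar> + 2"
  have "2 \<le> \<beta>" "0 < \<beta> / 2 - \<alpha>"
    unfolding \<beta>_def by auto
  have "ereal \<beta> < \<infinity>"
    by simp
  from order_tendstoD(1)[OF slope this]
  have "\<forall>\<^sub>F x in at_right 0. \<beta> \<le> G x / F x"
    by eventually_elim simp
  then obtain C where upper: "\<forall>\<^sub>F x in at_right 0. F x \<le> C * sin x powr (\<beta> - 1)"
    by (rule eventually_F_le_sin_powr)
  define K where "K = 4 * C / cos 1 + sqrt (4 * L * C / cos 1)"
  have lim: "((\<lambda>x. K * sin x powr (\<beta> / 2 - \<alpha>)) \<longlongrightarrow> 0) (at_right 0)"
    using \<open>0 < \<beta> / 2 - \<alpha>\<close> by real_asymp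
  have bounds: "\<forall>\<^sub>F x in at_right 0.
      0 \<le> (G x - F x) / sin x powr \<alpha> \<and> (G x - F x) / sin x powr \<alpha> \<le> K * sin x powr (\<beta> / 2 - \<alpha>)"
    using upper eventually_in_domain
  proof eventually_elim
    case (elim x)
    then have "G x - F x \<le> K * sin x powr (\<beta> / 2)"
      unfolding K_def using \<open>2 \<le> \<beta>\<close> by (intro gap_le_sin_powr) auto
    then have "(G x - F x) / sin x powr \<alpha> \<le> K * sin x powr (\<beta> / 2) / sin x powr \<alpha>"
      by (simp add: divide_right_mono)
    also have "\<dots> = K * sin x powr (\<beta> / 2 - \<alpha>)"
      by (simp add: powr_diff)
    finally show ?case
      using F_less_G[of x] elim by simp
  qed
  show ?thesis
  proof (rule tendsto_sandwich[OF _ _ tendsto_const lim])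
    show "\<forall>\<^sub>F x in at_right 0. 0 \<le> (G x - F x) / sin x powr \<alpha>"
      using bounds by eventually_elim simp
    show "\<forall>\<^sub>F x in at_right 0. (G x - F x) / sin x powr \<alpha> \<le> K * sin x powr (\<beta> / 2 - \<alpha>)"
      using bounds by eventually_elim simp
  qed
qed

lemma sin_power_dichotomy_gap:
  assumes slope: "((\<lambda>x. ereal (G x / F x)) \<longlongrightarrow> \<mu>) (at_right 0)"
  shows "sin_power_dichotomy (\<lambda>x. G x - F x) (at_right 0) \<mu> \<alpha>"
  unfolding sin_power_dichotomy_def
proof (intro conjI impI)
  assume "ereal (\<alpha> + 1) < \<mu>"
  then show "((\<lambda>x. (G x - F x) / sin x powr \<alpha>) \<longlongrightarrow> 0) (at_right 0)"
    using slope gap_over_sin_powr_tendsto_0_finite gap_over_sin_powr_tendsto_0_infinite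
    by (cases \<mu>) auto
qed (use gap_over_sin_powr_at_top[OF slope] in blast)

end

section \<open>Radii of curvature of a support function\<close>

lemma C3_real_has_derivatives:
  assumes "C3_real r"
  shows "(r has_real_derivative deriv r x) (at x)"
    and "(deriv r has_real_derivative deriv (deriv r) x) (at x)"
    and "(deriv (deriv r) has_real_derivative deriv (deriv (deriv r)) x) (at x)"
  using assms unfolding C3_real_def by (simp_all add: DERIV_deriv_iff_real_differentiable)

lemma radius1_eq:
  "sin \<theta> \<noteq> 0 \<Longrightarrow> radius1 r \<theta> = r \<theta> + deriv r \<theta> * cos \<theta> / sin \<theta>"
  by (simp add: radius1_def)

lemma astig_eq:
  "sin \<theta> \<noteq> 0 \<Longrightarrow> astig r \<theta> = deriv (deriv r) \<theta> - deriv r \<theta> * cos \<theta> / sin \<theta>"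
  by (simp add: astig_def radius1_def radius2_def)

lemma radius1_0: "radius1 r 0 = radius2 r 0"
  by (simp add: radius1_def)

lemma radius1_has_derivative:
  assumes "C3_real r" "sin x \<noteq> 0"
  shows "(radius1 r has_real_derivative astig r x * cos x / sin x) (at x)"
proof -
  note D = C3_real_has_derivatives[OF assms(1)]
  have "((\<lambda>\<theta>. r \<theta> + deriv r \<theta> * cos \<theta> / sin \<theta>) has_real_derivative
      deriv r x + ((deriv (deriv r) x * cos x + - sin x * deriv r x) * sin x - deriv r x * cos x * cos x)
        / (sin x * sin x)) (at x)"
    by (intro DERIV_add DERIV_divide DERIV_mult D DERIV_cos DERIV_sin assms(2))
  moreover have "deriv r x + ((deriv (deriv r) x * cos x + - sin x * deriv r x) * sin x
        - deriv r x * cos x * cos x) / (sin x * sin x) = astig r x * cos x / sin x"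
    using assms(2) sin_cos_squared_add[of x]
    by (simp add: astig_eq field_simps power2_eq_square)
  moreover have "open {\<theta>. sin \<theta> \<noteq> (0::real)}"
    by (intro open_Collect_neq continuous_intros)
  ultimately show ?thesis
    using assms(2) by (auto intro: has_field_derivative_transform_within_open simp: radius1_eq)
qed

lemma radius2_has_derivative:
  assumes "C3_real r"
  shows "(radius2 r has_real_derivative deriv (deriv (deriv r)) x + deriv r x) (at x)"
  unfolding radius2_def[abs_def] by (intro DERIV_add C3_real_has_derivatives assms)

lemma radius2_lipschitz_on:
  assumes "C3_real r"
  obtains L where "0 < L" "L-lipschitz_on {0..1} (radius2 r)"
proof -
  have "continuous_on {0..1} (deriv (deriv (deriv r)))"
    using assms unfolding C3_real_def by (auto elim: continuous_on_subset)
  moreover have "continuous_on {0..1} (deriv r)"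
    using DERIV_isCont[OF C3_real_has_derivatives(2)[OF assms]]
    by (intro continuous_at_imp_continuous_on) simp
  ultimately have "continuous_on {0..1} (\<lambda>x. deriv (deriv (deriv r)) x + deriv r x)"
    by (rule continuous_on_add)
  then obtain B where B: "\<And>x. x \<in> {0..1} \<Longrightarrow> norm (deriv (deriv (deriv r)) x + deriv r x) \<le> B"
    using compact_Icc by (meson continuous_on_compact_bound)
  have "(max B 1)-lipschitz_on {0..1} (radius2 r)"
  proof (rule lipschitz_onI)
    fix x y :: real assume "x \<in> {0..1}" "y \<in> {0..1}"
    have "(radius2 r has_real_derivative deriv (deriv (deriv r)) z + deriv r z) (at z within {0..1})"
      for z
      using radius2_has_derivative[OF assms] by (rule has_field_derivative_at_within)
    then have "norm (radius2 r x - radius2 r y) \<le> max B 1 * norm (x - y)"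
      using B \<open>x \<in> {0..1}\<close> \<open>y \<in> {0..1}\<close>
      by (intro field_differentiable_bound[OF convex_real_interval(5)])
        (auto intro: order_trans[OF _ max.cobounded1])
    then show "dist (radius2 r x) (radius2 r y) \<le> max B 1 * dist x y"
      by (simp add: dist_norm)
  qed simp
  then show thesis
    by (rule that[rotated]) simp
qed

lemma radius1_tendsto_at_right_0:
  assumes "C3_real r" "\<And>\<theta>. r (- \<theta>) = r \<theta>"
  shows "(radius1 r \<longlongrightarrow> radius1 r 0) (at_right 0)"
proof -
  note D = C3_real_has_derivatives[OF assms(1)]
  have "deriv r 0 = 0"
    using assms(2) D(1) by (rule deriv_zero_if_even)
  then have "((\<lambda>\<theta>. deriv r \<theta> / \<theta>) \<longlongrightarrow> deriv (deriv r) 0) (at_right 0)"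
    using D(2)[of 0] unfolding DERIV_def by (auto intro: tendsto_within_subset)
  moreover have "((\<lambda>\<theta>. \<theta> * cos \<theta> / sin \<theta>) \<longlongrightarrow> 1) (at_right (0::real))"
    by real_asymp
  moreover have "(r \<longlongrightarrow> r 0) (at_right 0)"
    using DERIV_isCont[OF D(1), of 0] unfolding isCont_def by (rule tendsto_within_subset) simp
  ultimately have "((\<lambda>\<theta>. r \<theta> + deriv r \<theta> / \<theta> * (\<theta> * cos \<theta> / sin \<theta>))
      \<longlongrightarrow> r 0 + deriv (deriv r) 0 * 1) (at_right 0)"
    by (intro tendsto_add tendsto_mult)
  then have "((\<lambda>\<theta>. r \<theta> + deriv r \<theta> / \<theta> * (\<theta> * cos \<theta> / sin \<theta>)) \<longlongrightarrow> radius1 r 0) (at_right 0)"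
    unfolding radius1_0 radius2_def by (simp only: mult_1_right add.commute)
  moreover have "\<forall>\<^sub>F \<theta> in at_right 0. r \<theta> + deriv r \<theta> / \<theta> * (\<theta> * cos \<theta> / sin \<theta>) = radius1 r \<theta>"
  proof (rule eventually_at_rightI[of 0 pi])
    fix \<theta> :: real assume "\<theta> \<in> {0<..<pi}"
    then have "sin \<theta> \<noteq> 0"
      using sin_gt_zero by force
    then show "r \<theta> + deriv r \<theta> / \<theta> * (\<theta> * cos \<theta> / sin \<theta>) = radius1 r \<theta>"
      using \<open>\<theta> \<in> {0<..<pi}\<close> by (simp add: radius1_eq)
  qed simp
  ultimately show ?thesis
    by (rule Lim_transform_eventually)
qed

lemma continuous_on_astig:
  assumes "C3_real r"
  shows "continuous_on {0<..<pi} (astig r)"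
proof -
  note D = C3_real_has_derivatives[OF assms]
  have sin_nz: "sin \<theta> \<noteq> 0" if "\<theta> \<in> {0<..<pi}" for \<theta>
    using sin_gt_zero that by force
  have "continuous_on {0<..<pi} (\<lambda>\<theta>. deriv (deriv r) \<theta> - deriv r \<theta> * cos \<theta> / sin \<theta>)"
    using DERIV_isCont[OF D(2)] DERIV_isCont[OF D(3)] sin_nz
    by (intro continuous_at_imp_continuous_on ballI continuous_intros) auto
  then show ?thesis
    by (rule continuous_on_cong[THEN iffD1, rotated 2]) (auto simp: astig_eq sin_nz)
qed

lemma scaled_radii_diff:
  "\<sigma> * (radius2 r \<theta> - radius2 r 0) - \<sigma> * (radius1 r \<theta> - radius1 r 0) = \<sigma> * astig r \<theta>"
  by (simp add: astig_def radius1_0 algebra_simps)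

lemma umbilic_radii_support_function:
  assumes C3: "C3_real r" and even: "\<And>\<theta>. r (- \<theta>) = r \<theta>"
    and "0 < e" and pos: "\<And>x. 0 < x \<Longrightarrow> x < e \<Longrightarrow> 0 < \<sigma> * astig r x"
    and "0 < L" and L: "L-lipschitz_on {0..1} (radius2 r)"
  shows "umbilic_radii (\<lambda>\<theta>. \<sigma> * (radius1 r \<theta> - radius1 r 0)) (\<lambda>\<theta>. \<sigma> * (radius2 r \<theta> - radius2 r 0))
           (min e 1) (\<bar>\<sigma>\<bar> * L)"
proof
  show "0 < min e 1" "min e 1 \<le> 1"
    using \<open>0 < e\<close> by auto
next
  fix x assume x: "0 < x" "x < min e 1"
  then have "sin x \<noteq> 0"
    using sin_gt_zero[of x] pi_gt3 by force
  have "((\<lambda>\<theta>. \<sigma> * (radius1 r \<theta> - radius1 r 0)) has_real_derivative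
      \<sigma> * (astig r x * cos x / sin x - 0)) (at x)"
    by (intro DERIV_cmult DERIV_diff radius1_has_derivative C3 \<open>sin x \<noteq> 0\<close> DERIV_const)
  then show "((\<lambda>\<theta>. \<sigma> * (radius1 r \<theta> - radius1 r 0)) has_real_derivative
      (\<sigma> * (radius2 r x - radius2 r 0) - \<sigma> * (radius1 r x - radius1 r 0)) * cos x / sin x) (at x)"
    by (simp add: scaled_radii_diff mult.assoc)
  show "\<sigma> * (radius1 r x - radius1 r 0) < \<sigma> * (radius2 r x - radius2 r 0)"
    using pos[of x] x scaled_radii_diff[of \<sigma> r x] by simp
next
  have "(\<bar>\<sigma>\<bar> * (L + 0))-lipschitz_on {0..1} (\<lambda>\<theta>. \<sigma> * (radius2 r \<theta> - radius2 r 0))"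
    by (intro lipschitz_on_cmult_real lipschitz_on_diff L lipschitz_on_constant)
  then have "(\<bar>\<sigma>\<bar> * L)-lipschitz_on {0..1} (\<lambda>\<theta>. \<sigma> * (radius2 r \<theta> - radius2 r 0))"
    by simp
  then show "(\<bar>\<sigma>\<bar> * L)-lipschitz_on {0<..<min e 1} (\<lambda>\<theta>. \<sigma> * (radius2 r \<theta> - radius2 r 0))"
    by (rule lipschitz_on_subset) auto
  have "\<sigma> \<noteq> 0"
    using pos[of "e / 2"] \<open>0 < e\<close> by auto
  then show "0 < \<bar>\<sigma>\<bar> * L"
    using \<open>0 < L\<close> by simp
  show "((\<lambda>\<theta>. \<sigma> * (radius1 r \<theta> - radius1 r 0)) \<longlongrightarrow> 0) (at_right 0)"
    using radius1_tendsto_at_right_0[OF C3 even] by (auto intro!: tendsto_eq_intros)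
  have "(radius2 r \<longlongrightarrow> radius2 r 0) (at_right 0)"
    using DERIV_isCont[OF radius2_has_derivative[OF C3], of 0] unfolding isCont_def
    by (rule tendsto_within_subset) simp
  then show "((\<lambda>\<theta>. \<sigma> * (radius2 r \<theta> - radius2 r 0)) \<longlongrightarrow> 0) (at_right 0)"
    by (auto intro!: tendsto_eq_intros)
qed

lemma sin_power_dichotomy_at_0_of_sign:
  assumes C3: "C3_real r" and even: "\<And>\<theta>. r (- \<theta>) = r \<theta>" and slope: "umbilic_slope_0 r \<mu>"
    and "0 < e" and pos: "\<And>x. 0 < x \<Longrightarrow> x < e \<Longrightarrow> 0 < \<sigma> * astig r x"
  shows "sin_power_dichotomy (\<lambda>\<theta>. \<sigma> * astig r \<theta>) (at_right 0) \<mu> \<alpha>"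
proof -
  obtain L where "0 < L" and L: "L-lipschitz_on {0..1} (radius2 r)"
    using C3 by (rule radius2_lipschitz_on)
  interpret umbilic_radii "\<lambda>\<theta>. \<sigma> * (radius1 r \<theta> - radius1 r 0)" "\<lambda>\<theta>. \<sigma> * (radius2 r \<theta> - radius2 r 0)"
    "min e 1" "\<bar>\<sigma>\<bar> * L"
    using C3 even \<open>0 < e\<close> pos \<open>0 < L\<close> L by (rule umbilic_radii_support_function)
  have "\<sigma> \<noteq> 0"
    using pos[of "e / 2"] \<open>0 < e\<close> by auto
  then have "((\<lambda>x. ereal (\<sigma> * (radius2 r x - radius2 r 0) / (\<sigma> * (radius1 r x - radius1 r 0))))
      \<longlongrightarrow> \<mu>) (at_right 0)"
    using slope unfolding umbilic_slope_0_def by simp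
  from sin_power_dichotomy_gap[OF this] show ?thesis
    by (simp only: scaled_radii_diff)
qed

lemma sin_power_dichotomy_at_0:
  assumes C3: "C3_real r" and even: "\<And>\<theta>. r (- \<theta>) = r \<theta>"
    and "isolated_umbilic_0 r" and slope: "umbilic_slope_0 r \<mu>"
  shows "sin_power_dichotomy (astig r) (at_right 0) \<mu> \<alpha>"
proof -
  obtain e where "0 < e" and nonzero: "\<And>x. 0 < x \<Longrightarrow> x < e \<Longrightarrow> astig r x \<noteq> 0"
    using assms(3) unfolding isolated_umbilic_0_def by blast
  define e' where "e' = min e pi"
  have "0 < e'"
    using \<open>0 < e\<close> by (simp add: e'_def)
  have "continuous_on {0<..<e'} (astig r)"
    using continuous_on_astig[OF C3] by (rule continuous_on_subset) (auto simp: e'_def)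
  then consider "\<forall>x\<in>{0<..<e'}. 0 < astig r x" | "\<forall>x\<in>{0<..<e'}. astig r x < 0"
    using continuous_on_nonzero_sign_cases[of "{0<..<e'}" "astig r"] nonzero
    by (auto simp: e'_def)
  then show ?thesis
  proof cases
    case 1
    then have "sin_power_dichotomy (\<lambda>\<theta>. 1 * astig r \<theta>) (at_right 0) \<mu> \<alpha>"
      by (intro sin_power_dichotomy_at_0_of_sign[OF C3 even slope \<open>0 < e'\<close>]) auto
    then show ?thesis
      by simp
  next
    case 2
    then have "sin_power_dichotomy (\<lambda>\<theta>. -1 * astig r \<theta>) (at_right 0) \<mu> \<alpha>"
      by (intro sin_power_dichotomy_at_0_of_sign[OF C3 even slope \<open>0 < e'\<close>]) auto
    then show ?thesis
      by (simp add: sin_power_dichotomy_uminus)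
  qed
qed

section \<open>The pole \<open>\<theta> = \<pi>\<close>\<close>

lemma derivs_reflect:
  assumes "C3_real r"
  shows "deriv (\<lambda>\<theta>. r (a - \<theta>)) = (\<lambda>x. - deriv r (a - x))"
    and "deriv (deriv (\<lambda>\<theta>. r (a - \<theta>))) = (\<lambda>x. deriv (deriv r) (a - x))"
    and "deriv (deriv (deriv (\<lambda>\<theta>. r (a - \<theta>)))) = (\<lambda>x. - deriv (deriv (deriv r)) (a - x))"
proof -
  note D = C3_real_has_derivatives[OF assms]
  show d1: "deriv (\<lambda>\<theta>. r (a - \<theta>)) = (\<lambda>x. - deriv r (a - x))"
    using D(1) by (rule deriv_reflect)
  show d2: "deriv (deriv (\<lambda>\<theta>. r (a - \<theta>))) = (\<lambda>x. deriv (deriv r) (a - x))"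
    unfolding d1 using DERIV_minus[OF DERIV_reflect[OF D(2)]] by (intro ext DERIV_imp_deriv) simp
  show "deriv (deriv (deriv (\<lambda>\<theta>. r (a - \<theta>)))) = (\<lambda>x. - deriv (deriv (deriv r)) (a - x))"
    unfolding d2 using D(3) by (rule deriv_reflect)
qed

lemma C3_real_reflect:
  assumes "C3_real r"
  shows "C3_real (\<lambda>\<theta>. r (a - \<theta>))"
  unfolding C3_real_def
proof (intro conjI allI)
  note D = C3_real_has_derivatives[OF assms]
  fix x
  show "(\<lambda>\<theta>. r (a - \<theta>)) differentiable at x"
    using DERIV_reflect[OF D(1)] by (auto simp: real_differentiable_def)
  show "deriv (\<lambda>\<theta>. r (a - \<theta>)) differentiable at x"
    unfolding derivs_reflect(1)[OF assms] using DERIV_minus[OF DERIV_reflect[OF D(2)]]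
    by (auto simp: real_differentiable_def)
  show "deriv (deriv (\<lambda>\<theta>. r (a - \<theta>))) differentiable at x"
    unfolding derivs_reflect(2)[OF assms] using DERIV_reflect[OF D(3)]
    by (auto simp: real_differentiable_def)
next
  have "continuous_on UNIV (deriv (deriv (deriv r)))"
    using assms unfolding C3_real_def by simp
  then have "continuous_on UNIV (\<lambda>x. deriv (deriv (deriv r)) (a - x))"
    by (rule continuous_on_compose2[OF _ continuous_on_diff[OF continuous_on_const continuous_on_id]])
      simp
  then show "continuous_on UNIV (deriv (deriv (deriv (\<lambda>\<theta>. r (a - \<theta>)))))"
    unfolding derivs_reflect(3)[OF assms] by (rule continuous_on_minus)
qed

lemma radii_reflect_pi:
  assumes "C3_real r"
  shows "radius2 (\<lambda>\<theta>. r (pi - \<theta>)) x = radius2 r (pi - x)"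
    and "radius1 (\<lambda>\<theta>. r (pi - \<theta>)) x = radius1 r (pi - x)"
    and "astig (\<lambda>\<theta>. r (pi - \<theta>)) x = astig r (pi - x)"
proof -
  show r2: "radius2 (\<lambda>\<theta>. r (pi - \<theta>)) x = radius2 r (pi - x)"
    unfolding radius2_def derivs_reflect(2)[OF assms] by simp
  show r1: "radius1 (\<lambda>\<theta>. r (pi - \<theta>)) x = radius1 r (pi - x)"
    unfolding radius1_def r2 derivs_reflect(1)[OF assms] by simp
  show "astig (\<lambda>\<theta>. r (pi - \<theta>)) x = astig r (pi - x)"
    unfolding astig_def r1 r2 ..
qed

lemma sin_power_dichotomy_at_pi:
  assumes C3: "C3_real r" and even: "\<And>\<theta>. r (pi + \<theta>) = r (pi - \<theta>)"
    and umbilic: "isolated_umbilic_pi r" and slope: "umbilic_slope_pi r \<mu>"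
  shows "sin_power_dichotomy (astig r) (at_left pi) \<mu> \<alpha>"
proof -
  define r' where "r' = (\<lambda>\<theta>. r (pi - \<theta>))"
  note reflect = radii_reflect_pi[OF C3, folded r'_def]
  have "C3_real r'"
    unfolding r'_def using C3 by (rule C3_real_reflect)
  moreover have "r' (- \<theta>) = r' \<theta>" for \<theta>
    unfolding r'_def using even[of \<theta>] by simp
  moreover have "isolated_umbilic_0 r'"
  proof -
    obtain e where "0 < e" "\<And>\<theta>. pi - e < \<theta> \<Longrightarrow> \<theta> < pi \<Longrightarrow> astig r \<theta> \<noteq> 0"
      using umbilic unfolding isolated_umbilic_pi_def by blast
    then show ?thesis
      using umbilic unfolding isolated_umbilic_0_def isolated_umbilic_pi_def reflect
      by (intro conjI exI[of _ e]) auto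
  qed
  moreover have "umbilic_slope_0 r' \<mu>"
    using slope unfolding umbilic_slope_0_def umbilic_slope_pi_def reflect filterlim_at_left_reflect
    by simp
  ultimately have "sin_power_dichotomy (astig r') (at_right 0) \<mu> \<alpha>"
    by (rule sin_power_dichotomy_at_0)
  then show ?thesis
    unfolding sin_power_dichotomy_at_left_pi_iff reflect .
qed

theorem proposition2p2:
  fixes r :: "real \<Rightarrow> real" and \<alpha> :: real
  assumes "in_W3 r"
  shows "(isolated_umbilic_0 r \<longrightarrow> (\<forall>\<mu>. umbilic_slope_0 r \<mu> \<longrightarrow>
            (\<mu> > ereal (\<alpha> + 1) \<longrightarrow>
               ((\<lambda>\<theta>. astig r \<theta> / sin \<theta> powr \<alpha>) \<longlongrightarrow> 0) (at_right 0)) \<and>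
            (\<mu> < ereal (\<alpha> + 1) \<longrightarrow>
               filterlim (\<lambda>\<theta>. astig r \<theta> / sin \<theta> powr \<alpha>) at_top (at_right 0) \<or>
               filterlim (\<lambda>\<theta>. astig r \<theta> / sin \<theta> powr \<alpha>) at_bot (at_right 0))))
       \<and>
         (isolated_umbilic_pi r \<longrightarrow> (\<forall>\<mu>. umbilic_slope_pi r \<mu> \<longrightarrow>
            (\<mu> > ereal (\<alpha> + 1) \<longrightarrow>
               ((\<lambda>\<theta>. astig r \<theta> / sin \<theta> powr \<alpha>) \<longlongrightarrow> 0) (at_left pi)) \<and>
            (\<mu> < ereal (\<alpha> + 1) \<longrightarrow>
               filterlim (\<lambda>\<theta>. astig r \<theta> / sin \<theta> powr \<alpha>) at_top (at_left pi) \<or>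
               filterlim (\<lambda>\<theta>. astig r \<theta> / sin \<theta> powr \<alpha>) at_bot (at_left pi))))"
proof -
  have C3: "C3_real r" and even_0: "\<And>\<theta>. r (- \<theta>) = r \<theta>"
    and even_pi: "\<And>\<theta>. r (pi + \<theta>) = r (pi - \<theta>)"
    using assms unfolding in_W3_def by auto
  show ?thesis
    unfolding sin_power_dichotomy_def[symmetric]
    using sin_power_dichotomy_at_0[OF C3 even_0] sin_power_dichotomy_at_pi[OF C3 even_pi] by blast
qed

end
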